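(* $c(7)\ge 5$.
   Context: $\mathbb{F}_q$ is the finite field with $q$ elements. Hamming distance $d(u,v)=|\{i:u_i\ne v_i\}|$ on $\mathbb{F}_q^3$; $B(u)=\{v:d(u,v)\le1\}$; $E(u)=\bigcup_{\lambda\in\mathbb{F}_q}B(\lambda u)$. A set $\mathcal{H}\subseteq\mathbb{F}_q^3$ is a short covering if $\bigcup_{h\in\mathcal{H}}E(h)=\mathbb{F}_q^3$; $c(q)$ is the minimum cardinality of a short covering of $\mathbb{F}_q^3$. *)

theory Defs
  imports "HOL-Analysis.Finite_Cartesian_Product" "HOL-Library.Numeral_Type"
begin

text \<open>Vectors in \<open>F_q^n\<close> are \<open>'a ^ 'n\<close>; the field \<open>F_7\<close> is the numeral type \<open>7\<close>
  (integers mod 7), and \<open>F_7^3\<close> is \<open>7 ^ 3\<close>.\<close>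

definition hamming :: "'a ^ 'n::finite \<Rightarrow> 'a ^ 'n \<Rightarrow> nat" where
  "hamming u v = card {i. u $ i \<noteq> v $ i}"

definition hball :: "'a ^ 'n::finite \<Rightarrow> ('a ^ 'n) set" where
  "hball u = {v. hamming u v \<le> 1}"

definition Eset :: "'a::comm_ring_1 ^ 'n::finite \<Rightarrow> ('a ^ 'n) set" where
  "Eset u = (\<Union>c. hball (\<chi> i. c * u $ i))"

definition short_covering :: "('a::comm_ring_1 ^ 'n::finite) set \<Rightarrow> bool" where
  "short_covering H \<longleftrightarrow> (\<Union>h\<in>H. Eset h) = UNIV"

definition min_short_covering :: "('a::comm_ring_1 ^ 'n::finite) itself \<Rightarrow> nat" where
  "min_short_covering _ = (LEAST k. \<exists>H :: ('a ^ 'n) set. short_covering H \<and> card H = k)"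

end

theory Submission
  imports Defs "HOL-Analysis.Cartesian_Space"
begin

text \<open>
  Count inside the chart \<open>T\<^sub>i = {v. v\<^sub>i = 1 \<and> all v\<^sub>l \<noteq> 0}\<close>, which has
  \<open>(q - 1)\<^sup>2\<close> points. A point of \<open>E(h)\<close> agrees with a multiple of \<open>h\<close> in two
  coordinates, so some \<open>2 \<times> 2\<close> minor of \<open>(v, h)\<close> vanishes: \<open>E(h) \<inter> T\<^sub>i\<close> lies on
  three lines of at most \<open>q - 1\<close> points through the point of \<open>T\<^sub>i\<close> proportional to
  \<open>h\<close>. Hence \<open>|E(h) \<inter> T\<^sub>i| \<le> 3(q - 1) - 2\<close>, at most \<open>q - 1\<close> if \<open>h\<close> has a zero
  coordinate and \<open>0\<close> if it has two.

  The points \<open>v\<^sub>i = 0, v\<^sub>j = 1, v\<^sub>k = s\<close> (\<open>s \<noteq> 0\<close>) need \<open>q - 1\<close> distinct covering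
  vectors unless some nonzero \<open>h \<in> H\<close> has \<open>h\<^sub>i = 0\<close>; so every coordinate is a zero of
  some nonzero member of \<open>H\<close>. If \<open>|H| \<le> 4\<close> and \<open>q \<ge> 7\<close>, counting on \<open>T\<^sub>0\<close> leaves
  room for only two such members, and one of them, \<open>e\<close>, has two zeros. The other one,
  \<open>g\<close>, vanishing at \<open>p\<close>, meets \<open>T\<^sub>p\<close> only on a line \<open>D\<close>; but the two remaining
  vectors cover at most \<open>2(3(q - 1) - 4)\<close> of the \<open>(q - 1)(q - 2)\<close> points of
  \<open>T\<^sub>p\<close> off \<open>D\<close>.
\<close>

lemma distinct3_cases:
  fixes i j k l :: 3
  assumes "distinct [i, j, k]"
  shows "l = i \<or> l = j \<or> l = k"
  using assms exhaust_3[of i] exhaust_3[of j] exhaust_3[of k] exhaust_3[of l] by auto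

lemma distinct3_extend:
  fixes a b :: 3
  assumes "a \<noteq> b"
  obtains c where "distinct [a, b, c]"
proof -
  have "card {a, b} \<noteq> CARD(3)" using assms by simp
  then obtain c where "c \<notin> {a, b}" by (metis UNIV_eq_I)
  with assms show ?thesis by (intro that[of c]) auto
qed

lemma distinct3_exists:
  fixes i :: 3
  obtains j k where "distinct [i, j, k]"
proof -
  have "card {i} \<noteq> CARD(3)" by simp
  then obtain j where "j \<notin> {i}" by (metis UNIV_eq_I)
  then obtain k where "distinct [j, i, k]" using distinct3_extend[of j i] by auto
  then show ?thesis by (intro that[of j k]) auto
qed

lemma vec3_eq_iff:
  fixes v w :: "'a ^ 3"
  assumes "distinct [i, j, k]"
  shows "v = w \<longleftrightarrow> v $ i = w $ i \<and> v $ j = w $ j \<and> v $ k = w $ k"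
proof
  assume "v $ i = w $ i \<and> v $ j = w $ j \<and> v $ k = w $ k"
  then have "v $ l = w $ l" for l using distinct3_cases[OF assms, of l] by auto
  then show "v = w" by (simp add: vec_eq_iff)
qed simp

definition vec3 :: "3 \<Rightarrow> 3 \<Rightarrow> 'a \<Rightarrow> 'a \<Rightarrow> 'a \<Rightarrow> 'a ^ 3" where
  "vec3 i j a b c = (\<chi> l. if l = i then a else if l = j then b else c)"

lemma vec3_nth:
  assumes "distinct [i, j, k]"
  shows "vec3 i j a b c $ i = a" "vec3 i j a b c $ j = b" "vec3 i j a b c $ k = c"
  using assms by (auto simp: vec3_def)

lemma double_zero_of_vanishing_pair:
  fixes z1 z2 :: "'a::zero ^ 3"
  assumes "\<forall>p. z1 $ p = 0 \<or> z2 $ p = 0"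
  obtains z l m where "z \<in> {z1, z2}" "l \<noteq> m" "z $ l = 0" "z $ m = 0"
proof -
  obtain i j k :: 3 where ijk: "distinct [i, j, k]" using distinct3_exists .
  have "z1 $ i = 0 \<and> z1 $ j = 0 \<or> z1 $ i = 0 \<and> z1 $ k = 0 \<or> z1 $ j = 0 \<and> z1 $ k = 0 \<or>
    z2 $ i = 0 \<and> z2 $ j = 0 \<or> z2 $ i = 0 \<and> z2 $ k = 0 \<or> z2 $ j = 0 \<and> z2 $ k = 0"
    using assms by blast
  then show ?thesis using ijk by (elim disjE) (auto intro: that)
qed

lemma card_Un3_le: "card (A \<union> B \<union> C) \<le> card A + card B + card C"
  by (meson add_mono card_Un_le le_refl order_trans)

lemma two_le_card: "2 \<le> CARD('a::{comm_ring_1,finite})"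
  using card_mono[of UNIV "{0 :: 'a, 1}"] by simp

lemma square_ge_seven_mul:
  fixes a :: nat
  assumes "6 \<le> a"
  shows "7 * a \<le> a\<^sup>2 + 6"
proof -
  define d where "d = a - 6"
  then have "a = d + 6" using assms by simp
  then show ?thesis by (simp add: power2_eq_square algebra_simps)
qed

lemma hamming_le_1_iff:
  "hamming u v \<le> 1 \<longleftrightarrow> (\<forall>l m. u $ l \<noteq> v $ l \<longrightarrow> u $ m \<noteq> v $ m \<longrightarrow> l = m)"
  unfolding hamming_def by (auto simp: card_le_Suc0_iff_eq)

lemma hamming_le_1_agree_on_two:
  fixes u v :: "'a ^ 3"
  assumes "distinct [i, j, k]" and "hamming u v \<le> 1"
  shows "u $ i = v $ i \<and> u $ j = v $ j \<or> u $ i = v $ i \<and> u $ k = v $ k \<or>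
    u $ j = v $ j \<and> u $ k = v $ k"
  using assms unfolding hamming_le_1_iff by auto

lemma mem_Eset_iff: "v \<in> Eset h \<longleftrightarrow> (\<exists>c. hamming (c *s h) v \<le> 1)"
  by (simp add: Eset_def hball_def vector_scalar_mult_def)

lemma Eset_self: "h \<in> Eset h"
  unfolding mem_Eset_iff by (rule exI[of _ 1]) (simp add: hamming_def)

lemma short_covering_UNIV: "short_covering UNIV"
  unfolding short_covering_def using Eset_self by blast

lemma le_min_short_covering:
  assumes "\<And>H :: ('a::comm_ring_1 ^ 'n::finite) set. short_covering H \<Longrightarrow> k \<le> card H"
  shows "k \<le> min_short_covering TYPE('a ^ 'n)"
proof -
  obtain H :: "('a ^ 'n) set" where "short_covering H" "card H = min_short_covering TYPE('a ^ 'n)"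
    unfolding min_short_covering_def
    using LeastI_ex[of "\<lambda>k. \<exists>H :: ('a ^ 'n) set. short_covering H \<and> card H = k"]
      short_covering_UNIV by blast
  with assms show ?thesis by metis
qed

definition chart :: "3 \<Rightarrow> ('a::comm_ring_1 ^ 3) set" where
  "chart i = {v. v $ i = 1 \<and> (\<forall>l. v $ l \<noteq> 0)}"

definition chart_line :: "3 \<Rightarrow> 3 \<Rightarrow> 3 \<Rightarrow> 'a::comm_ring_1 ^ 3 \<Rightarrow> ('a ^ 3) set" where
  "chart_line i a b h = {v \<in> chart i. v $ a * h $ b = v $ b * h $ a}"

lemma chart_line_commute: "chart_line i a b h = chart_line i b a h"
  unfolding chart_line_def by auto

lemma vec3_mem_chart:
  assumes "distinct [i, j, k]" and "b \<noteq> 0" and "c \<noteq> 0"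
  shows "vec3 i j 1 b c \<in> chart i"
  using assms by (simp add: chart_def vec3_def)

lemma card_chart:
  assumes "distinct [i, j, k]"
  shows "card (chart i :: ('a::{comm_ring_1,finite} ^ 3) set) = (CARD('a) - 1)\<^sup>2"
proof -
  let ?N = "UNIV - {0 :: 'a}"
  have "bij_betw (\<lambda>v. (v $ j, v $ k)) (chart i) (?N \<times> ?N)"
  proof (rule bij_betw_imageI)
    show "inj_on (\<lambda>v. (v $ j, v $ k)) (chart i)"
      by (auto simp: inj_on_def chart_def vec3_eq_iff[OF assms])
    show "(\<lambda>v. (v $ j, v $ k)) ` chart i = ?N \<times> ?N"
    proof
      show "(\<lambda>v. (v $ j, v $ k)) ` chart i \<subseteq> ?N \<times> ?N" by (auto simp: chart_def)
      show "?N \<times> ?N \<subseteq> (\<lambda>v. (v $ j, v $ k)) ` chart i"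
      proof
        fix p assume "p \<in> ?N \<times> ?N"
        then show "p \<in> (\<lambda>v. (v $ j, v $ k)) ` chart i"
          using vec3_mem_chart[OF assms]
          by (auto simp: vec3_nth[OF assms] intro!: image_eqI[of _ _ "vec3 i j 1 (fst p) (snd p)"])
      qed
    qed
  qed
  then show ?thesis by (simp add: bij_betw_same_card card_cartesian_product power2_eq_square)
qed

lemma card_le_if_inj_coordinate:
  fixes S :: "('a::{comm_ring_1,finite} ^ 3) set"
  assumes "S \<subseteq> chart i" and "inj_on (\<lambda>v. v $ m) S"
  shows "card S \<le> CARD('a) - 1"
proof -
  have "card S \<le> card (UNIV - {0 :: 'a})"
    using assms by (intro card_inj_on_le) (auto simp: chart_def)
  then show ?thesis by simp
qed

lemma minor_vanishes_if_agree:
  fixes c :: "'a::comm_ring_1"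
  assumes "c * h $ a = v $ a" and "c * h $ b = v $ b"
  shows "v $ a * h $ b = v $ b * h $ a"
  using assms by (metis mult.commute mult.left_commute)

lemma Eset_inter_chart_subset_lines:
  assumes "distinct [i, j, k]"
  shows "Eset h \<inter> chart i \<subseteq> chart_line i j i h \<union> chart_line i k i h \<union> chart_line i j k h"
proof
  fix v assume v: "v \<in> Eset h \<inter> chart i"
  then obtain c where "hamming (c *s h) v \<le> 1" by (auto simp: mem_Eset_iff)
  from hamming_le_1_agree_on_two[OF assms this]
  have "v $ j * h $ i = v $ i * h $ j \<or> v $ k * h $ i = v $ i * h $ k \<or> v $ j * h $ k = v $ k * h $ j"
    by (auto dest: minor_vanishes_if_agree)
  with v show "v \<in> chart_line i j i h \<union> chart_line i k i h \<union> chart_line i j k h"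
    by (auto simp: chart_line_def)
qed

lemma Eset_inter_chart_subset_line_if_zero:
  assumes "distinct [p, q, r]" and "h $ p = 0"
  shows "Eset h \<inter> chart i \<subseteq> chart_line i q r h"
proof
  fix v assume v: "v \<in> Eset h \<inter> chart i"
  then obtain c where c: "hamming (c *s h) v \<le> 1" by (auto simp: mem_Eset_iff)
  have "c * h $ p \<noteq> v $ p" using v assms(2) by (auto simp: chart_def)
  with hamming_le_1_agree_on_two[OF assms(1) c] have "c * h $ q = v $ q" "c * h $ r = v $ r"
    by auto
  with v show "v \<in> chart_line i q r h"
    by (auto simp: chart_line_def dest: minor_vanishes_if_agree)
qed

lemma Eset_inter_chart_empty_if_two_zeros:
  assumes "l \<noteq> m" and "h $ l = 0" and "h $ m = 0"
  shows "Eset h \<inter> chart i = {}"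
proof -
  have False if v: "v \<in> Eset h" "v \<in> chart i" for v
  proof -
    obtain c where "hamming (c *s h) v \<le> 1" using v(1) by (auto simp: mem_Eset_iff)
    moreover have "(c *s h) $ l \<noteq> v $ l" "(c *s h) $ m \<noteq> v $ m"
      using v(2) assms(2,3) by (auto simp: chart_def)
    ultimately show False using assms(1) unfolding hamming_le_1_iff by blast
  qed
  then show ?thesis by blast
qed

lemma card_chart_le_sum_Eset:
  fixes H :: "('a::{comm_ring_1,finite} ^ 3) set"
  assumes "short_covering H"
  shows "card (chart i :: ('a ^ 3) set) \<le> (\<Sum>h\<in>H. card (Eset h \<inter> chart i))"
proof -
  have "chart i \<subseteq> (\<Union>h\<in>H. Eset h \<inter> chart i)"
    using assms by (auto simp: short_covering_def)
  then have "card (chart i :: ('a ^ 3) set) \<le> card (\<Union>h\<in>H. Eset h \<inter> chart i)"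
    by (intro card_mono) simp_all
  also have "\<dots> \<le> (\<Sum>h\<in>H. card (Eset h \<inter> chart i))" by (rule card_UN_le) simp
  finally show ?thesis .
qed

text \<open>
  The numeral type \<^typ>\<open>7\<close> is only a \<^class>\<open>comm_ring_1\<close>, so a finite field is
  described as a finite commutative ring with an explicit inverse on nonzero elements.
\<close>

locale finite_field_recip =
  fixes recip :: "'a::{comm_ring_1,finite} \<Rightarrow> 'a"
  assumes mult_recip: "x \<noteq> 0 \<Longrightarrow> x * recip x = 1"
begin

lemma recip_mult: "(x::'a) \<noteq> 0 \<Longrightarrow> recip x * x = 1"
  using mult_recip by (simp add: mult.commute)

lemma recip_nonzero: "(x::'a) \<noteq> 0 \<Longrightarrow> recip x \<noteq> 0"
  using mult_recip by force

lemma product_eq_0_iff: "(x::'a) * y = 0 \<longleftrightarrow> x = 0 \<or> y = 0"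
proof
  assume xy: "x * y = 0"
  show "x = 0 \<or> y = 0"
  proof (cases "x = 0")
    case False
    then have "y = recip x * x * y" by (simp add: recip_mult)
    also have "\<dots> = 0" using xy by (simp add: mult.assoc)
    finally show ?thesis ..
  qed simp
qed auto

lemma cancel_left: "(c::'a) \<noteq> 0 \<Longrightarrow> c * x = c * y \<longleftrightarrow> x = y"
  using product_eq_0_iff[of c "x - y"] by (auto simp: right_diff_distrib)

lemma cancel_right: "(c::'a) \<noteq> 0 \<Longrightarrow> x * c = y * c \<longleftrightarrow> x = y"
  using cancel_left by (simp add: mult.commute)

text \<open>On a line of the chart, \<open>v $ a\<close> and \<open>v $ b\<close> are determined by the one coordinate
  not fixed to \<open>1\<close>.\<close>

lemma chart_line_inj_on_coordinate:
  fixes h :: "'a ^ 3"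
  assumes abc: "distinct [a, b, c]" and ha: "h $ a \<noteq> 0"
  shows "inj_on (\<lambda>v. v $ (if i = c then a else c)) (chart_line i a b h)"
proof (rule inj_onI)
  fix v w assume v: "v \<in> chart_line i a b h" and w: "w \<in> chart_line i a b h"
    and vw: "v $ (if i = c then a else c) = w $ (if i = c then a else c)"
  have va: "v $ a = w $ a"
  proof -
    consider "i = a" | "i = b" | "i = c" using distinct3_cases[OF abc] by blast
    then show ?thesis
    proof cases
      case 1
      then show ?thesis using v w by (simp add: chart_line_def chart_def)
    next
      case 2
      then have "v $ a * h $ b = h $ a" "w $ a * h $ b = h $ a"
        using v w by (auto simp: chart_line_def chart_def)
      moreover from this have "h $ b \<noteq> 0" using ha by auto
      ultimately show ?thesis using cancel_right[of "h $ b" "v $ a" "w $ a"] by simp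
    next
      case 3
      then show ?thesis using vw by simp
    qed
  qed
  have "v $ b * h $ a = w $ b * h $ a" using v w va by (simp add: chart_line_def)
  then have vb: "v $ b = w $ b" using cancel_right ha by blast
  have vc: "v $ c = w $ c"
    using vw v w by (cases "i = c") (auto simp: chart_line_def chart_def)
  show "v = w" using va vb vc by (simp add: vec3_eq_iff[OF abc])
qed

lemma card_chart_line_le:
  fixes h :: "'a ^ 3"
  assumes "a \<noteq> b" and "h $ a \<noteq> 0"
  shows "card (chart_line i a b h) \<le> CARD('a) - 1"
proof -
  obtain c where "distinct [a, b, c]" using distinct3_extend[OF assms(1)] .
  then have "inj_on (\<lambda>v. v $ (if i = c then a else c)) (chart_line i a b h)"
    using assms(2) by (rule chart_line_inj_on_coordinate)
  then show ?thesis by (rule card_le_if_inj_coordinate[rotated]) (auto simp: chart_line_def)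
qed

lemma card_Eset_inter_chart_le_if_zero:
  fixes h :: "'a ^ 3"
  assumes "h $ p = 0"
  shows "card (Eset h \<inter> chart i) \<le> CARD('a) - 1"
proof -
  obtain q r where pqr: "distinct [p, q, r]" using distinct3_exists .
  show ?thesis
  proof (cases "h $ q = 0")
    case True
    then have "Eset h \<inter> chart i = {}"
      using Eset_inter_chart_empty_if_two_zeros[of p q] pqr assms by auto
    then show ?thesis by simp
  next
    case False
    have "card (Eset h \<inter> chart i) \<le> card (chart_line i q r h)"
      using Eset_inter_chart_subset_line_if_zero[OF pqr assms] by (intro card_mono) auto
    also have "\<dots> \<le> CARD('a) - 1" using card_chart_line_le False pqr by auto
    finally show ?thesis .
  qed
qed

definition chart_center :: "3 \<Rightarrow> 'a ^ 3 \<Rightarrow> 'a ^ 3" where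
  "chart_center i h = recip (h $ i) *s h"

lemma chart_center_mem_chart_line:
  assumes "\<forall>l. h $ l \<noteq> 0"
  shows "chart_center i h \<in> chart_line i a b h"
  using assms
  by (auto simp: chart_center_def chart_line_def chart_def recip_mult mult_recip
      product_eq_0_iff recip_nonzero mult_ac)

lemma card_Eset_inter_chart_le:
  fixes h :: "'a ^ 3"
  shows "card (Eset h \<inter> chart i) \<le> 3 * (CARD('a) - 1) - 2"
proof (cases "\<forall>l. h $ l \<noteq> 0")
  case False
  then obtain p where "h $ p = 0" by auto
  then have "card (Eset h \<inter> chart i) \<le> CARD('a) - 1"
    by (rule card_Eset_inter_chart_le_if_zero)
  with two_le_card[where 'a='a] show ?thesis by linarith
next
  case True
  obtain j k where ijk: "distinct [i, j, k]" using distinct3_exists .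
  let ?c = "chart_center i h"
  let ?R = "chart_line i j i h" and ?C = "chart_line i k i h" and ?S = "chart_line i j k h"
  have "Eset h \<inter> chart i \<subseteq> ?R \<union> (?C - {?c}) \<union> (?S - {?c})"
    using Eset_inter_chart_subset_lines[OF ijk] chart_center_mem_chart_line[OF True] by blast
  then have "card (Eset h \<inter> chart i) \<le> card ?R + card (?C - {?c}) + card (?S - {?c})"
    by (meson card_Un3_le card_mono finite order_trans)
  moreover have "card ?R \<le> CARD('a) - 1" using ijk True by (intro card_chart_line_le) auto
  moreover have "card ?C \<le> CARD('a) - 1" using ijk True by (intro card_chart_line_le) auto
  moreover have "card ?S \<le> CARD('a) - 1" using ijk True by (intro card_chart_line_le) auto
  moreover have "?c \<in> ?C" "?c \<in> ?S" using chart_center_mem_chart_line[OF True] by auto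
  ultimately show ?thesis by (simp add: card_Diff_singleton)
qed

lemma chart_line_subset_if_center_mem:
  fixes g h :: "'a ^ 3"
  assumes h: "\<forall>l. h $ l \<noteq> 0" and c: "chart_center i h \<in> chart_line i j k g"
  shows "chart_line i j k h \<subseteq> chart_line i j k g"
proof
  have "recip (h $ i) * (h $ j * g $ k) = recip (h $ i) * (h $ k * g $ j)"
    using c by (simp add: chart_center_def chart_line_def mult_ac)
  then have hg: "h $ j * g $ k = h $ k * g $ j" using cancel_left recip_nonzero h by blast
  fix v assume v: "v \<in> chart_line i j k h"
  have "h $ j * (v $ j * g $ k) = v $ j * (h $ j * g $ k)" by (simp add: mult_ac)
  also have "\<dots> = (v $ j * h $ k) * g $ j" using hg by (simp add: mult_ac)
  also have "\<dots> = (v $ k * h $ j) * g $ j" using v by (simp add: chart_line_def)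
  also have "\<dots> = h $ j * (v $ k * g $ j)" by (simp add: mult_ac)
  finally show "v \<in> chart_line i j k g" using v cancel_left h by (auto simp: chart_line_def)
qed

lemma chart_line_meets_chart_line:
  fixes g h :: "'a ^ 3"
  assumes ijk: "distinct [i, j, k]"
    and "h $ i \<noteq> 0" "h $ j \<noteq> 0" "g $ j \<noteq> 0" "g $ k \<noteq> 0"
  obtains r where "r \<in> chart_line i j i h" "r \<in> chart_line i j k g"
proof -
  define x where "x = h $ j * recip (h $ i)"
  define y where "y = x * g $ k * recip (g $ j)"
  have "x \<noteq> 0" "y \<noteq> 0" using assms by (simp_all add: x_def y_def product_eq_0_iff recip_nonzero)
  then have "vec3 i j 1 x y \<in> chart i" by (rule vec3_mem_chart[OF ijk])
  moreover have "x * h $ i = h $ j" using assms by (simp add: x_def mult.assoc recip_mult)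
  moreover have "y * g $ j = x * g $ k" using assms by (simp add: y_def mult.assoc recip_mult)
  ultimately show ?thesis
    by (intro that[of "vec3 i j 1 x y"]) (simp_all add: chart_line_def vec3_nth[OF ijk])
qed

lemma card_Eset_inter_chart_Diff_line_le_if_center_mem:
  fixes g h :: "'a ^ 3"
  assumes ijk: "distinct [i, j, k]" and h: "\<forall>l. h $ l \<noteq> 0"
    and c: "chart_center i h \<in> chart_line i j k g"
  shows "card (Eset h \<inter> chart i - chart_line i j k g) \<le> 2 * (CARD('a) - 2)"
proof -
  let ?c = "chart_center i h"
  let ?R = "chart_line i j i h" and ?C = "chart_line i k i h"
  have "Eset h \<inter> chart i - chart_line i j k g \<subseteq> (?R - {?c}) \<union> (?C - {?c})"
    using Eset_inter_chart_subset_lines[OF ijk] chart_line_subset_if_center_mem[OF h c] c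
    by blast
  then have "card (Eset h \<inter> chart i - chart_line i j k g) \<le> card (?R - {?c}) + card (?C - {?c})"
    by (meson card_Un_le card_mono finite order_trans)
  moreover have "card ?R \<le> CARD('a) - 1" using ijk h by (intro card_chart_line_le) auto
  moreover have "card ?C \<le> CARD('a) - 1" using ijk h by (intro card_chart_line_le) auto
  moreover have "?c \<in> ?R" "?c \<in> ?C" using chart_center_mem_chart_line[OF h] by auto
  ultimately show ?thesis by (simp add: card_Diff_singleton)
qed

lemma card_Eset_inter_chart_Diff_line_le_if_center_not_mem:
  fixes g h :: "'a ^ 3"
  assumes ijk: "distinct [i, j, k]" and h: "\<forall>l. h $ l \<noteq> 0"
    and g: "g $ j \<noteq> 0" "g $ k \<noteq> 0" and c: "chart_center i h \<notin> chart_line i j k g"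
  shows "card (Eset h \<inter> chart i - chart_line i j k g) \<le> 3 * (CARD('a) - 1) - 4"
proof -
  let ?c = "chart_center i h" and ?D = "chart_line i j k g"
  let ?R = "chart_line i j i h" and ?C = "chart_line i k i h" and ?S = "chart_line i j k h"
  obtain r where r: "r \<in> ?R" "r \<in> ?D"
    using chart_line_meets_chart_line[OF ijk] h g by metis
  have ikj: "distinct [i, k, j]" using ijk by auto
  obtain r' where r': "r' \<in> ?C" "r' \<in> chart_line i k j g"
    using chart_line_meets_chart_line[OF ikj] h g by metis
  have r'D: "r' \<in> ?D" using r'(2) chart_line_commute[of i k j g] by simp
  have cR: "?c \<in> ?R" "?c \<in> ?C" "?c \<in> ?S" using chart_center_mem_chart_line[OF h] by auto
  have "Eset h \<inter> chart i - ?D \<subseteq> (?R - {r}) \<union> (?C - {?c, r'}) \<union> (?S - {?c})"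
    using Eset_inter_chart_subset_lines[OF ijk] cR c r r'(1) r'D by blast
  then have "card (Eset h \<inter> chart i - ?D) \<le> card (?R - {r}) + card (?C - {?c, r'}) + card (?S - {?c})"
    by (meson card_Un3_le card_mono finite order_trans)
  moreover have "card (?C - {?c, r'}) = card ?C - 2"
  proof -
    have "?c \<noteq> r'" using c r'D by blast
    then show ?thesis using cR r'(1) by (subst card_Diff_subset) auto
  qed
  moreover have "card ?R \<le> CARD('a) - 1" using ijk h by (intro card_chart_line_le) auto
  moreover have "card ?C \<le> CARD('a) - 1" using ijk h by (intro card_chart_line_le) auto
  moreover have "card ?S \<le> CARD('a) - 1" using ijk h by (intro card_chart_line_le) auto
  ultimately show ?thesis using r cR by (simp add: card_Diff_singleton)
qed

lemma card_Eset_inter_chart_Diff_line_le: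
  fixes g h :: "'a ^ 3"
  assumes ijk: "distinct [i, j, k]" and g: "g $ j \<noteq> 0" "g $ k \<noteq> 0" and q: "3 \<le> CARD('a)"
  shows "card (Eset h \<inter> chart i - chart_line i j k g) \<le> 3 * (CARD('a) - 1) - 4"
proof (cases "\<forall>l. h $ l \<noteq> 0")
  case False
  then obtain p where "h $ p = 0" by auto
  then have "card (Eset h \<inter> chart i) \<le> CARD('a) - 1"
    by (rule card_Eset_inter_chart_le_if_zero)
  moreover have "card (Eset h \<inter> chart i - chart_line i j k g) \<le> card (Eset h \<inter> chart i)"
    by (rule card_mono) auto
  ultimately show ?thesis using q by linarith
next
  case True
  show ?thesis
  proof (cases "chart_center i h \<in> chart_line i j k g")
    case True
    with \<open>\<forall>l. h $ l \<noteq> 0\<close> show ?thesis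
      using card_Eset_inter_chart_Diff_line_le_if_center_mem[OF ijk] q by fastforce
  next
    case False
    with \<open>\<forall>l. h $ l \<noteq> 0\<close> show ?thesis
      by (rule card_Eset_inter_chart_Diff_line_le_if_center_not_mem[OF ijk _ g])
  qed
qed

lemma vec3_mem_Eset_ratio:
  fixes h :: "'a ^ 3"
  assumes ijk: "distinct [i, j, k]" and h: "h = 0 \<or> h $ i \<noteq> 0" and s: "s \<noteq> 0"
    and v: "vec3 i j 0 1 s \<in> Eset h"
  shows "s = h $ k * recip (h $ j)"
proof -
  obtain c where c: "hamming (c *s h) (vec3 i j 0 1 s) \<le> 1" using v by (auto simp: mem_Eset_iff)
  note agree = hamming_le_1_agree_on_two[OF ijk c, unfolded vector_smult_component vec3_nth[OF ijk]]
  have "c * h $ i \<noteq> 0"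
  proof
    assume "c * h $ i = 0"
    then have "c * h $ j = 0" "c * h $ k = 0" using h by (auto simp: product_eq_0_iff)
    then show False using agree s by auto
  qed
  then have cj: "c * h $ j = 1" and ck: "c * h $ k = s" using agree by auto
  then have "h $ j \<noteq> 0" by auto
  then have "c = c * h $ j * recip (h $ j)" by (simp add: mult.assoc mult_recip)
  with cj ck show ?thesis by (simp add: mult.commute)
qed

lemma short_covering_vanishing_coordinate:
  fixes H :: "('a ^ 3) set"
  assumes cover: "short_covering H" and small: "card H < CARD('a) - 1"
  obtains h where "h \<in> H" "h \<noteq> 0" "h $ i = 0"
proof -
  obtain j k where ijk: "distinct [i, j, k]" using distinct3_exists .
  let ?ratio = "\<lambda>h. h $ k * recip (h $ j)"
  have "\<exists>h\<in>H. h \<noteq> 0 \<and> h $ i = 0"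
  proof (rule ccontr)
    assume "\<not> (\<exists>h\<in>H. h \<noteq> 0 \<and> h $ i = 0)"
    then have none: "\<forall>h\<in>H. h = 0 \<or> h $ i \<noteq> 0" by blast
    have "UNIV - {0} \<subseteq> ?ratio ` H"
    proof
      fix s :: 'a assume "s \<in> UNIV - {0}"
      moreover obtain h where "h \<in> H" "vec3 i j 0 1 s \<in> Eset h"
        using cover by (auto simp: short_covering_def)
      ultimately show "s \<in> ?ratio ` H" using vec3_mem_Eset_ratio[OF ijk] none by blast
    qed
    then have "card (UNIV - {0 :: 'a}) \<le> card (?ratio ` H)" by (intro card_mono) auto
    also have "\<dots> \<le> card H" by (rule card_image_le) simp
    finally show False using small by simp
  qed
  with that show ?thesis by blast
qed

lemma card_vanishing_part_le_2:
  fixes H Z :: "('a ^ 3) set"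
  assumes cover: "short_covering H" and q: "7 \<le> CARD('a)" and small: "card H \<le> 4"
    and Z: "Z \<subseteq> H" "\<forall>z\<in>Z. \<exists>p. z $ p = 0"
  shows "card Z \<le> 2"
proof (rule ccontr)
  assume "\<not> card Z \<le> 2"
  obtain j k where ijk: "distinct [0 :: 3, j, k]" by (rule distinct3_exists)
  define a where "a = CARD('a) - 1"
  let ?f = "\<lambda>h. card (Eset h \<inter> chart 0)"
  have "a\<^sup>2 \<le> (\<Sum>h\<in>H. ?f h)"
    using card_chart[OF ijk, where 'a='a] card_chart_le_sum_Eset[OF cover, of 0] by (simp add: a_def)
  also have "\<dots> = (\<Sum>h\<in>Z. ?f h) + (\<Sum>h\<in>H - Z. ?f h)"
    using sum.subset_diff[OF Z(1)] by (simp add: add.commute)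
  also have "\<dots> \<le> (\<Sum>h\<in>Z. a) + (\<Sum>h\<in>H - Z. 3 * a - 2)"
    using Z(2) card_Eset_inter_chart_le_if_zero card_Eset_inter_chart_le
    by (intro add_mono sum_mono) (auto simp: a_def)
  finally have count: "a\<^sup>2 \<le> a * card Z + (3 * a - 2) * card (H - Z)" by (simp add: mult.commute)
  have zw: "card Z + card (H - Z) \<le> 4"
    using small Z(1) card_Diff_subset[of Z H] card_mono[OF _ Z(1)] by simp
  have a6: "6 \<le> a" using q by (simp add: a_def)
  have sq: "7 * a \<le> a\<^sup>2 + 6" using a6 by (rule square_ge_seven_mul)
  show False
  proof (cases "card (H - Z) = 0")
    case True
    then have "a\<^sup>2 \<le> a * card Z" using count by (simp only: mult_0_right add_0_right)
    moreover have "a * card Z \<le> a * 4" using zw by (intro mult_left_mono) auto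
    ultimately show False using sq a6 by linarith
  next
    case False
    then have "card (H - Z) = 1" using zw \<open>\<not> card Z \<le> 2\<close> by linarith
    then have "a\<^sup>2 \<le> a * card Z + (3 * a - 2)" using count by simp
    moreover have "card Z \<le> 3" using False zw by linarith
    then have "a * card Z \<le> a * 3" by (intro mult_left_mono) auto
    ultimately show False using sq a6 by linarith
  qed
qed

lemma no_short_covering_with_vanishing_pair:
  fixes H :: "('a ^ 3) set" and e g :: "'a ^ 3"
  assumes cover: "short_covering H" and q: "7 \<le> CARD('a)" and rest: "card (H - {e, g}) \<le> 2"
    and e: "l \<noteq> m" "e $ l = 0" "e $ m = 0" and g: "g $ p = 0"
  shows False
proof -
  obtain j k where pjk: "distinct [p, j, k]" using distinct3_exists .
  obtain g' where g': "g' $ j \<noteq> 0" "g' $ k \<noteq> 0" and gD: "Eset g \<inter> chart p \<subseteq> chart_line p j k g'"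
  proof (cases "g $ j = 0 \<or> g $ k = 0")
    case True
    txt \<open>Then \<open>E(g)\<close> misses the chart and any line will do.\<close>
    then have "Eset g \<inter> chart p = {}"
      using Eset_inter_chart_empty_if_two_zeros g pjk by (metis distinct_length_2_or_more)
    then show ?thesis using that[of 1] by simp
  next
    case False
    then show ?thesis using that[of g] Eset_inter_chart_subset_line_if_zero[OF pjk g] by auto
  qed
  define a where "a = CARD('a) - 1"
  let ?D = "chart_line p j k g'"
  have "chart p - ?D \<subseteq> (\<Union>h\<in>H - {e, g}. Eset h \<inter> chart p - ?D)"
  proof
    fix v assume v: "v \<in> chart p - ?D"
    obtain h where "h \<in> H" "v \<in> Eset h" using cover by (auto simp: short_covering_def)
    moreover have "h \<noteq> e" using Eset_inter_chart_empty_if_two_zeros[OF e] v \<open>v \<in> Eset h\<close> by blast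
    moreover have "h \<noteq> g" using gD v \<open>v \<in> Eset h\<close> by blast
    ultimately show "v \<in> (\<Union>h\<in>H - {e, g}. Eset h \<inter> chart p - ?D)" using v by blast
  qed
  then have "card (chart p - ?D) \<le> card (\<Union>h\<in>H - {e, g}. Eset h \<inter> chart p - ?D)"
    by (intro card_mono) auto
  also have "\<dots> \<le> (\<Sum>h\<in>H - {e, g}. card (Eset h \<inter> chart p - ?D))"
    by (rule card_UN_le) simp
  also have "\<dots> \<le> (\<Sum>h\<in>H - {e, g}. 3 * a - 4)"
    unfolding a_def using pjk g' q by (intro sum_mono card_Eset_inter_chart_Diff_line_le) auto
  also have "\<dots> \<le> 2 * (3 * a - 4)" using rest by simp
  finally have "card (chart p - ?D) \<le> 2 * (3 * a - 4)" .
  moreover have "card (chart p :: ('a ^ 3) set) - card ?D \<le> card (chart p - ?D)"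
    by (rule diff_card_le_card_Diff) simp
  moreover have "card (chart p :: ('a ^ 3) set) = a\<^sup>2" using card_chart[OF pjk] by (simp add: a_def)
  moreover have "card ?D \<le> a" unfolding a_def using g' pjk by (intro card_chart_line_le) auto
  moreover have "6 \<le> a" using q by (simp add: a_def)
  moreover from this have "7 * a \<le> a\<^sup>2 + 6" by (rule square_ge_seven_mul)
  ultimately show False by linarith
qed

theorem card_short_covering_ge_5:
  fixes H :: "('a ^ 3) set"
  assumes cover: "short_covering H" and q: "7 \<le> CARD('a)"
  shows "5 \<le> card H"
proof (rule ccontr)
  assume "\<not> 5 \<le> card H"
  then have small: "card H \<le> 4" by simp
  define Z where "Z = {h \<in> H. h \<noteq> 0 \<and> (\<exists>p. h $ p = 0)}"
  have ZH: "Z \<subseteq> H" and Z_zero: "\<forall>z\<in>Z. \<exists>p. z $ p = 0" by (auto simp: Z_def)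
  have vanish: "\<exists>z\<in>Z. z $ p = 0" for p
  proof -
    have "card H < CARD('a) - 1" using small q by linarith
    then obtain h where "h \<in> H" "h \<noteq> 0" "h $ p = 0"
      by (rule short_covering_vanishing_coordinate[OF cover])
    then show ?thesis by (auto simp: Z_def)
  qed
  have "card Z \<le> 2" by (rule card_vanishing_part_le_2[OF cover q small ZH Z_zero])
  moreover have "\<not> card Z \<le> 1"
  proof
    assume "card Z \<le> 1"
    obtain z where z: "z \<in> Z" using vanish by blast
    have "z $ p = 0" for p
      using vanish[of p] z \<open>card Z \<le> 1\<close> card_le_Suc0_iff_eq[of Z] by auto
    then have "z = 0" by (simp add: vec_eq_iff)
    with z show False by (simp add: Z_def)
  qed
  ultimately have "card Z = 2" by simp
  then obtain z1 z2 where Z: "Z = {z1, z2}" unfolding card_2_iff by blast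
  have "card (H - Z) = card H - card Z" by (rule card_Diff_subset) (simp_all add: ZH)
  with small \<open>card Z = 2\<close> have rest: "card (H - Z) \<le> 2" by simp
  have "\<forall>p. z1 $ p = 0 \<or> z2 $ p = 0" using vanish Z by auto
  then obtain e l m where e: "e \<in> {z1, z2}" "l \<noteq> m" "e $ l = 0" "e $ m = 0"
    by (rule double_zero_of_vanishing_pair)
  define g where "g = (if e = z1 then z2 else z1)"
  have eg: "Z = {e, g}" using e(1) Z by (auto simp: g_def)
  then obtain p where "g $ p = 0" using Z_zero by auto
  with no_short_covering_with_vanishing_pair[OF cover q _ e(2-4)] rest show False
    unfolding eg by blast
qed

end

lemma mod7_exhaust: "(x :: 7) \<in> {0, 1, 2, 3, 4, 5, 6}"
proof (induct x)
  case (of_int z)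
  then have "z \<in> {0, 1, 2, 3, 4, 5, 6}" by auto
  then show ?case by auto
qed

interpretation F7: finite_field_recip "\<lambda>x :: 7. x ^ 5"
proof
  fix x :: 7
  show "x \<noteq> 0 \<Longrightarrow> x * x ^ 5 = 1" using mod7_exhaust[of x] by auto
qed

theorem proposition19:
  shows "5 \<le> min_short_covering TYPE(7 ^ 3)"
  by (rule le_min_short_covering) (rule F7.card_short_covering_ge_5; simp)

end
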